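(* Let $n\ge1$, $R>0$, $\gamma\in(0,1)$, $\beta=\frac{2}{2-\gamma}$, and let $U\in C^2((R,\infty))$, positive on $(R,\infty)$, with $U,U'$ extending continuously to $r=R$, solve $$U''+\Big(\frac{n-1}{r}+\frac r2\Big)U'-\frac\beta2U=\gamma U^{\gamma-1}\ \text{ in }(R,\infty),\qquad U(R)=U'(R)=0.$$ Then $U>0$ and $U'>0$ in $(R,\infty)$, $(U^{1/\beta})'(R)=\frac{\sqrt2}{\beta}$ (as a right derivative, i.e. $\lim_{r\downarrow R}U^{1/\beta}(r)/(r-R)=\sqrt2/\beta$), and $\lim_{r\to\infty}U(r)/r^\beta=c$ for some $c>0$. *)

theory Defs
  imports "HOL-Analysis.Analysis"
begin

end

theory Submission
  imports Defs "HOL-Real_Asymp.Real_Asymp"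
begin

(*
  At a zero of U' the equation gives U'' = \<gamma> U^(\<gamma>-1) + \<beta>/2 U > 0, so U' can never return to 0
  once it is positive; and it is positive somewhere near R because U rises from 0.

  Near R the energy U'^2/2 - U^\<gamma> - \<beta>/4 U^2 vanishes in the limit and has derivative
  -drift(r) U'^2 with drift(r) = (n-1)/r + r/2 bounded. Since U'' > 0 near R (there U^(\<gamma>-1) blows up),
  U' is increasing and the energy is O((r - R) U'^2). Hence U'^2/U^\<gamma> tends to 2, i.e. the
  derivative U^(-\<gamma>/2) U'/\<beta> of U^(1/\<beta>) tends to sqrt 2/\<beta>, and l'Hopital gives the slope.

  At infinity we follow W = r U' - \<beta> U, for which (U/r^\<beta>)' = W/r^(\<beta>+1) and
  W' = r \<gamma> U^(\<gamma>-1) - (n-2+\<beta>) U' - r W/2. The damping term -r W/2 first bounds W from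
  above, whence U = O(r^\<beta>) and U' = O(r^(\<beta>-1)), and then from below by -L r^(\<beta>-2).
  So U/r^\<beta> - L/(2 r^2) is nondecreasing and bounded; it converges, and choosing L small
  compared to U(r1) r1^(2-\<beta>) at the starting point r1 makes the limit positive.
*)

lemma exists_first_zero:
  fixes h :: "real \<Rightarrow> real"
  assumes cont: "continuous_on {a..x} h" and "a \<le> x" "h a > 0" "h x \<le> 0"
  obtains t where "a < t" "t \<le> x" "h t = 0" "\<And>y. a \<le> y \<Longrightarrow> y < t \<Longrightarrow> h y > 0"
proof -
  define Z where "Z = {y \<in> {a..x}. h y \<le> 0}"
  have "closed Z"
    unfolding Z_def by (rule continuous_on_closed_Collect_le[OF cont continuous_on_const]) simp
  moreover have "x \<in> Z" "bdd_below Z"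
    using assms by (auto simp: Z_def bdd_below_def)
  ultimately have "Inf Z \<in> Z" using closed_contains_Inf by blast
  define t where "t = Inf Z"
  have ht: "h t \<le> 0" "a \<le> t" "t \<le> x"
    using \<open>Inf Z \<in> Z\<close> by (auto simp: Z_def t_def)
  with \<open>h a > 0\<close> have "a < t" by (cases "a = t") auto
  have before: "h y > 0" if "a \<le> y" "y < t" for y
  proof (rule ccontr)
    assume "\<not> h y > 0"
    with that ht have "y \<in> Z" by (auto simp: Z_def)
    with \<open>bdd_below Z\<close> have "t \<le> y" unfolding t_def by (simp add: cInf_lower)
    with \<open>y < t\<close> show False by simp
  qed
  have "h t = 0"
  proof (rule ccontr)
    assume "h t \<noteq> 0"
    with ht have "h t < 0" by simp
    have "continuous_on {a..t} h"
      using cont ht by (auto intro: continuous_on_subset)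
    then obtain y where "a \<le> y" "y \<le> t" "h y = 0"
      using IVT2'[of h t 0 a] \<open>h t < 0\<close> \<open>h a > 0\<close> \<open>a < t\<close> by force
    with before \<open>h t < 0\<close> show False by (cases "y = t") fastforce+
  qed
  with \<open>a < t\<close> ht before that show ?thesis by blast
qed

lemma pos_if_DERIV_pos_at_zeros:
  fixes h h' :: "real \<Rightarrow> real"
  assumes deriv: "\<And>x. x \<ge> a \<Longrightarrow> (h has_real_derivative h' x) (at x)"
    and start: "h a > 0"
    and zeros: "\<And>x. x > a \<Longrightarrow> h x = 0 \<Longrightarrow> h' x > 0"
    and "x \<ge> a"
  shows "h x > 0"
proof (rule ccontr)
  assume "\<not> h x > 0"
  have "continuous_on {a..x} h"
    using deriv by (meson DERIV_atLeastAtMost_imp_continuous_on atLeastAtMost_iff)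
  then obtain t where t: "a < t" "h t = 0" and before: "\<And>y. a \<le> y \<Longrightarrow> y < t \<Longrightarrow> h y > 0"
    using exists_first_zero \<open>x \<ge> a\<close> start \<open>\<not> h x > 0\<close> by (metis not_less)
  with zeros have "h' t > 0" by simp
  then obtain d where d: "d > 0" "\<And>e. e > 0 \<Longrightarrow> e < d \<Longrightarrow> h (t - e) < h t"
    using DERIV_pos_inc_left[OF deriv] t by (meson less_imp_le)
  define e where "e = min (d / 2) ((t - a) / 2)"
  have "e > 0" "e < d" "a \<le> t - e"
    using d \<open>a < t\<close> by (auto simp: e_def min_def field_simps)
  with d t before[of "t - e"] show False by fastforce
qed

lemma exists_DERIV_pos_if_tendsto_0_at_right:
  fixes f f' :: "real \<Rightarrow> real"
  assumes deriv: "\<And>x. x > a \<Longrightarrow> (f has_real_derivative f' x) (at x)"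
    and lim: "(f \<longlongrightarrow> 0) (at_right a)"
    and pos: "\<And>x. x > a \<Longrightarrow> f x > 0"
    and "a < b"
  shows "\<exists>s. a < s \<and> s < b \<and> f' s > 0"
proof (rule ccontr)
  assume nonpos: "\<nexists>s. a < s \<and> s < b \<and> f' s > 0"
  define t where "t = (a + b) / 2"
  have t: "a < t" "t < b" using \<open>a < b\<close> by (auto simp: t_def)
  have "eventually (\<lambda>s. f t \<le> f s) (at_right a)"
  proof (rule eventually_at_rightI)
    fix s assume s: "s \<in> {a<..<t}"
    show "f t \<le> f s"
    proof (rule DERIV_nonpos_imp_nonincreasing[of s t f])
      fix x assume "s \<le> x" "x \<le> t"
      with s t have "a < x" "x < b" by auto
      with deriv nonpos show "\<exists>y. DERIV f x :> y \<and> y \<le> 0" by (meson not_less)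
    qed (use s in simp)
  qed (use t in simp)
  with lim have "f t \<le> 0" by (intro tendsto_lowerbound) auto
  with pos t show False by force
qed

lemma abs_le_DERIV_bound_at_right:
  fixes F F' :: "real \<Rightarrow> real"
  assumes lim: "(F \<longlongrightarrow> 0) (at_right a)" and "a < r"
    and deriv: "\<And>x. a < x \<Longrightarrow> x \<le> r \<Longrightarrow> (F has_real_derivative F' x) (at x)"
    and bound: "\<And>x. a < x \<Longrightarrow> x < r \<Longrightarrow> \<bar>F' x\<bar> \<le> B"
  shows "\<bar>F r\<bar> \<le> B * (r - a)"
proof -
  have "B \<ge> 0" using bound[of "(a + r) / 2"] \<open>a < r\<close> by simp
  have "eventually (\<lambda>s. \<bar>F r - F s\<bar> \<le> B * (r - a)) (at_right a)"
  proof (rule eventually_at_rightI)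
    fix s assume s: "s \<in> {a<..<r}"
    obtain z where z: "s < z" "z < r" "F r - F s = (r - s) * F' z"
      using MVT2[of s r F F'] s deriv by force
    have "\<bar>F r - F s\<bar> \<le> (r - s) * B"
      using z s bound[of z] by (simp add: abs_mult mult_left_mono)
    also have "\<dots> \<le> B * (r - a)"
      using s \<open>B \<ge> 0\<close> by (simp add: mult.commute mult_left_mono)
    finally show "\<bar>F r - F s\<bar> \<le> B * (r - a)" .
  qed (use \<open>a < r\<close> in simp)
  moreover have "((\<lambda>s. \<bar>F r - F s\<bar>) \<longlongrightarrow> \<bar>F r - 0\<bar>) (at_right a)"
    by (intro tendsto_intros lim)
  ultimately show ?thesis by (simp add: tendsto_upperbound)
qed

lemma tendsto_of_relative_error:
  fixes q E e :: "'a \<Rightarrow> real"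
  assumes E: "(E \<longlongrightarrow> l) F" and e: "(e \<longlongrightarrow> 0) F"
    and err: "eventually (\<lambda>x. 0 \<le> e x \<and> \<bar>q x - E x\<bar> \<le> e x * q x) F"
  shows "(q \<longlongrightarrow> l) F"
proof (rule tendsto_sandwich[of "\<lambda>x. E x / (1 + e x)" q _ "\<lambda>x. E x / (1 - e x)"])
  show "eventually (\<lambda>x. E x / (1 + e x) \<le> q x) F"
    using err by eventually_elim (simp add: divide_le_eq abs_le_iff algebra_simps)
  show "eventually (\<lambda>x. q x \<le> E x / (1 - e x)) F"
    using err order_tendstoD(2)[OF e zero_less_one]
    by eventually_elim (simp add: le_divide_eq abs_le_iff algebra_simps)
  show "((\<lambda>x. E x / (1 + e x)) \<longlongrightarrow> l) F" "((\<lambda>x. E x / (1 - e x)) \<longlongrightarrow> l) F"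
    using tendsto_divide[OF E tendsto_add[OF tendsto_const e, of 1]]
      tendsto_divide[OF E tendsto_diff[OF tendsto_const e, of 1]] by simp_all
qed

lemma mono_on_bounded_tendsto_SUP_at_top:
  fixes g :: "real \<Rightarrow> real"
  assumes mono: "mono_on {a..} g" and bound: "\<And>x. x \<ge> a \<Longrightarrow> g x \<le> C"
  shows "(g \<longlongrightarrow> (SUP x\<in>{a..}. g x)) at_top"
proof (rule increasing_tendsto)
  have bdd: "bdd_above (g ` {a..})" using bound by (auto simp: bdd_above_def)
  show "eventually (\<lambda>x. g x \<le> (SUP x\<in>{a..}. g x)) at_top"
    using eventually_ge_at_top[of a] by eventually_elim (auto intro: cSUP_upper[OF _ bdd])
  fix y assume "y < (SUP x\<in>{a..}. g x)"
  then obtain x where x: "x \<ge> a" "y < g x" using less_cSUP_iff[OF _ bdd] by auto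
  show "eventually (\<lambda>z. y < g z) at_top"
    using eventually_ge_at_top[of x]
    by eventually_elim (meson x mono mono_onD atLeast_iff order_trans less_le_trans)
qed

locale self_similar_profile =
  fixes n :: nat and R \<gamma> \<beta> :: real and U U' U'' :: "real \<Rightarrow> real"
  assumes n_ge_1: "n \<ge> 1"
    and R_pos: "R > 0"
    and gamma_pos: "0 < \<gamma>" and gamma_less_1: "\<gamma> < 1"
    and beta_eq: "\<beta> = 2 / (2 - \<gamma>)"
    and U_deriv: "\<And>r. r > R \<Longrightarrow> (U has_real_derivative U' r) (at r)"
    and U'_deriv: "\<And>r. r > R \<Longrightarrow> (U' has_real_derivative U'' r) (at r)"
    and U_pos: "\<And>r. r > R \<Longrightarrow> U r > 0"
    and ode: "\<And>r. r > R \<Longrightarrow>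
      U'' r + ((real n - 1) / r + r / 2) * U' r - \<beta> / 2 * U r = \<gamma> * U r powr (\<gamma> - 1)"
    and U_tendsto_0: "(U \<longlongrightarrow> 0) (at_right R)"
    and U'_tendsto_0: "(U' \<longlongrightarrow> 0) (at_right R)"
begin

definition drift :: "real \<Rightarrow> real"
  where "drift r = (real n - 1) / r + r / 2"

lemma beta_gt_1: "\<beta> > 1"
  using gamma_pos gamma_less_1 by (simp add: beta_eq field_simps)

lemma beta_less_2: "\<beta> < 2"
  using gamma_pos gamma_less_1 by (simp add: beta_eq field_simps)

lemma inverse_beta_eq: "1 / \<beta> = 1 - \<gamma> / 2"
  using gamma_less_1 by (simp add: beta_eq field_simps)

lemma drift_nonneg: "r > R \<Longrightarrow> drift r \<ge> 0"
  using R_pos n_ge_1 by (simp add: drift_def)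

lemma U''_eq: "r > R \<Longrightarrow> U'' r = \<gamma> * U r powr (\<gamma> - 1) + \<beta> / 2 * U r - drift r * U' r"
  using ode[of r] by (simp add: drift_def algebra_simps)

lemma U''_pos_if_U'_zero: "r > R \<Longrightarrow> U' r = 0 \<Longrightarrow> U'' r > 0"
  using U''_eq[of r] U_pos[of r] gamma_pos beta_gt_1 by (simp add: add_pos_pos)

lemma U'_pos: "r > R \<Longrightarrow> U' r > 0"
proof -
  assume "r > R"
  then obtain s where s: "R < s" "s < r" "U' s > 0"
    using exists_DERIV_pos_if_tendsto_0_at_right[OF U_deriv U_tendsto_0 U_pos] by blast
  show "U' r > 0"
    by (rule pos_if_DERIV_pos_at_zeros[of s U' U''])
       (use s U'_deriv U''_pos_if_U'_zero in auto)
qed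

lemma U_mono: "R < s \<Longrightarrow> s \<le> t \<Longrightarrow> U s \<le> U t"
proof (rule DERIV_nonneg_imp_nondecreasing[of s t U])
  fix x assume "R < s" "s \<le> x"
  then show "\<exists>y. DERIV U x :> y \<and> y \<ge> 0"
    using U_deriv U'_pos by (meson less_imp_le less_le_trans)
qed

lemma U_powr_tendsto_0: "e > 0 \<Longrightarrow> ((\<lambda>r. U r powr e) \<longlongrightarrow> 0) (at_right R)"
  by (rule tendsto_zero_powrI[OF U_tendsto_0 tendsto_const])
     (auto intro: eventually_mono[OF eventually_at_right_less[of R]] less_imp_le U_pos)

lemma U''_pos_near_R: "eventually (\<lambda>r. U'' r > 0) (at_right R)"
proof -
  have "((\<lambda>r. drift r * U' r) \<longlongrightarrow> drift R * 0) (at_right R)"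
    unfolding drift_def using R_pos by (intro tendsto_intros U'_tendsto_0) auto
  then have "eventually (\<lambda>r. \<bar>drift r * U' r\<bar> < \<gamma>) (at_right R)"
    using gamma_pos by (auto dest!: tendsto_norm[THEN order_tendstoD(2)] simp del: abs_mult)
  moreover have "eventually (\<lambda>r. U r < 1) (at_right R)"
    using order_tendstoD(2)[OF U_tendsto_0] by simp
  ultimately show ?thesis
    using eventually_at_right_less
  proof eventually_elim
    case (elim r)
    have "1 powr (\<gamma> - 1) < U r powr (\<gamma> - 1)"
      by (rule powr_less_mono2_neg) (use elim U_pos gamma_less_1 in auto)
    then have "\<gamma> < \<gamma> * U r powr (\<gamma> - 1)" using gamma_pos by simp
    moreover have "0 < \<beta> / 2 * U r" using beta_gt_1 U_pos elim by simp
    ultimately show ?case using U''_eq[of r] elim by auto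
  qed
qed

definition energy :: "real \<Rightarrow> real"
  where "energy r = U' r ^ 2 / 2 - U r powr \<gamma> - \<beta> / 4 * U r ^ 2"

lemma energy_deriv: "r > R \<Longrightarrow> (energy has_real_derivative - drift r * U' r ^ 2) (at r)"
proof -
  assume r: "r > R"
  have "(energy has_real_derivative
      U' r * U'' r - \<gamma> * U r powr (\<gamma> - 1) * U' r - \<beta> / 2 * U r * U' r) (at r)"
    unfolding energy_def
    by (rule derivative_eq_intros DERIV_fun_powr U_deriv U'_deriv refl | use r U_pos in simp)+
  then show ?thesis using U''_eq[OF r] by (simp add: power2_eq_square algebra_simps)
qed

lemma energy_tendsto_0: "(energy \<longlongrightarrow> 0) (at_right R)"
proof -
  have "(energy \<longlongrightarrow> 0 ^ 2 / 2 - 0 - \<beta> / 4 * 0 ^ 2) (at_right R)"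
    unfolding energy_def
    by (intro tendsto_intros U_tendsto_0 U'_tendsto_0 U_powr_tendsto_0 gamma_pos) simp
  then show ?thesis by simp
qed

lemma drift_le: "R < r \<Longrightarrow> r \<le> R + 1 \<Longrightarrow> drift r \<le> (real n - 1) / R + (R + 1) / 2"
proof -
  assume r: "R < r" "r \<le> R + 1"
  then have "(real n - 1) / r \<le> (real n - 1) / R"
    using R_pos n_ge_1 by (intro divide_left_mono) auto
  moreover have "r / 2 \<le> (R + 1) / 2" using r by simp
  ultimately show ?thesis unfolding drift_def by linarith
qed

lemma U'_increasing_near_R:
  obtains b where "R < b" "b \<le> R + 1" "\<And>s r. R < s \<Longrightarrow> s < r \<Longrightarrow> r < b \<Longrightarrow> U' s < U' r"
proof -
  obtain b0 where "b0 > R" and b0: "\<And>r. R < r \<Longrightarrow> r < b0 \<Longrightarrow> U'' r > 0"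
    using U''_pos_near_R unfolding eventually_at_right_field by blast
  define b where "b = min b0 (R + 1)"
  have "U' s < U' r" if "R < s" "s < r" "r < b" for s r
  proof (rule DERIV_pos_imp_increasing[OF \<open>s < r\<close>])
    fix x assume "s \<le> x" "x \<le> r"
    with that have "R < x" "x < b0" by (auto simp: b_def)
    with U'_deriv b0 show "\<exists>y. DERIV U' x :> y \<and> y > 0" by blast
  qed
  moreover have "R < b" "b \<le> R + 1" using \<open>b0 > R\<close> by (auto simp: b_def)
  ultimately show ?thesis using that by blast
qed

lemma energy_bound_near_R:
  obtains A where "A \<ge> 0" "eventually (\<lambda>r. \<bar>energy r\<bar> \<le> A * (r - R) * U' r ^ 2) (at_right R)"
proof -
  obtain b where b: "R < b" "b \<le> R + 1" and U'_less: "\<And>s r. R < s \<Longrightarrow> s < r \<Longrightarrow> r < b \<Longrightarrow> U' s < U' r"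
    using U'_increasing_near_R by blast
  define A where "A = (real n - 1) / R + (R + 1) / 2"
  have bound: "\<bar>energy r\<bar> \<le> A * U' r ^ 2 * (r - R)" if r: "R < r" "r < b" for r
  proof (rule abs_le_DERIV_bound_at_right[OF energy_tendsto_0 \<open>R < r\<close> energy_deriv])
    fix z assume z: "R < z" "z < r"
    with U'_pos[of z] U'_less[of z r] r have "U' z ^ 2 \<le> U' r ^ 2" by (simp add: power_mono)
    moreover have "0 \<le> drift z" "drift z \<le> A"
      using drift_nonneg drift_le z r b unfolding A_def by auto
    ultimately have "drift z * U' z ^ 2 \<le> A * U' r ^ 2" by (intro mult_mono) auto
    then show "\<bar>- drift z * U' z ^ 2\<bar> \<le> A * U' r ^ 2"
      using \<open>0 \<le> drift z\<close> by simp
  qed simp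
  have "eventually (\<lambda>r. R < r \<and> r < b) (at_right R)"
    using b(1) eventually_at_right_field by blast
  then have "eventually (\<lambda>r. \<bar>energy r\<bar> \<le> A * (r - R) * U' r ^ 2) (at_right R)"
    by eventually_elim (use bound in \<open>simp add: mult_ac\<close>)
  moreover have "A \<ge> 0" using R_pos n_ge_1 by (simp add: A_def)
  ultimately show ?thesis using that by blast
qed

lemma U'_sq_over_U_powr_tendsto_2: "((\<lambda>r. U' r ^ 2 / U r powr \<gamma>) \<longlongrightarrow> 2) (at_right R)"
proof -
  obtain A where A: "A \<ge> 0"
    and bound: "eventually (\<lambda>r. \<bar>energy r\<bar> \<le> A * (r - R) * U' r ^ 2) (at_right R)"
    using energy_bound_near_R .
  define q where "q r = U' r ^ 2 / U r powr \<gamma>" for r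
  define E where "E r = 2 + \<beta> / 2 * U r powr (2 - \<gamma>)" for r
  define e where "e r = 2 * A * (r - R)" for r
  have err: "eventually (\<lambda>r. 0 \<le> e r \<and> \<bar>q r - E r\<bar> \<le> e r * q r) (at_right R)"
    using bound eventually_at_right_less[of R]
  proof eventually_elim
    case (elim r)
    have "U r > 0" using U_pos elim by simp
    then have P: "U r powr \<gamma> > 0" by simp
    have "U r ^ 2 / U r powr \<gamma> = U r powr (2 - \<gamma>)"
      using \<open>U r > 0\<close> by (simp add: powr_diff powr_realpow)
    then have "q r - E r = 2 * energy r / U r powr \<gamma>"
      using P by (simp add: q_def E_def energy_def field_simps)
    then have "\<bar>q r - E r\<bar> = 2 * \<bar>energy r\<bar> / U r powr \<gamma>"
      using P by simp
    also have "\<dots> \<le> e r * q r"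
      using elim P by (simp add: e_def q_def divide_right_mono)
    finally show ?case using A elim by (simp add: e_def)
  qed
  have "(E \<longlongrightarrow> 2 + \<beta> / 2 * 0) (at_right R)"
    unfolding E_def using gamma_less_1 by (intro tendsto_intros U_powr_tendsto_0) simp
  moreover have "(e \<longlongrightarrow> 2 * A * (R - R)) (at_right R)"
    unfolding e_def by (intro tendsto_intros)
  ultimately have "(q \<longlongrightarrow> 2) (at_right R)"
    using tendsto_of_relative_error[OF _ _ err] by simp
  then show ?thesis by (simp add: q_def[abs_def])
qed

lemma root_profile_deriv_eq:
  assumes "r > R"
  shows "U r powr (1 / \<beta> - 1) * U' r = sqrt (U' r ^ 2 / U r powr \<gamma>)"
proof -
  have "1 / \<beta> - 1 = - (\<gamma> / 2)" using inverse_beta_eq by simp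
  then have "U r powr (1 / \<beta> - 1) = inverse (sqrt (U r powr \<gamma>))"
    using U_pos[OF assms] by (simp add: powr_minus powr_half_sqrt_powr)
  moreover have "sqrt (U' r ^ 2 / U r powr \<gamma>) = U' r / sqrt (U r powr \<gamma>)"
    using U'_pos[OF assms] by (simp add: real_sqrt_divide)
  ultimately show ?thesis by (simp add: divide_inverse mult.commute)
qed

lemma root_profile_slope_at_R:
  "((\<lambda>r. U r powr (1 / \<beta>) / (r - R)) \<longlongrightarrow> sqrt 2 / \<beta>) (at_right R)"
proof (rule lhopital_right[where f' = "\<lambda>r. 1 / \<beta> * U r powr (1 / \<beta> - 1) * U' r" and g' = "\<lambda>_. 1"])
  show "((\<lambda>r. U r powr (1 / \<beta>)) \<longlongrightarrow> 0) (at_right R)"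
    using beta_gt_1 by (intro U_powr_tendsto_0) simp
  show "((\<lambda>r. r - R) \<longlongrightarrow> 0) (at_right R)"
    by (rule tendsto_eq_intros refl | simp)+
  show "eventually (\<lambda>r. r - R \<noteq> 0) (at_right R)"
    using eventually_at_right_less[of R] by (auto elim: eventually_mono)
  show "eventually (\<lambda>r. DERIV (\<lambda>r. U r powr (1 / \<beta>)) r :> 1 / \<beta> * U r powr (1 / \<beta> - 1) * U' r)
      (at_right R)"
    using eventually_at_right_less[of R]
    by eventually_elim (use DERIV_fun_powr[OF U_deriv U_pos] in \<open>simp only: of_nat_1\<close>)
  show "eventually (\<lambda>r. DERIV (\<lambda>r. r - R) r :> 1) (at_right R)"
    by (rule always_eventually) (auto intro!: derivative_eq_intros)
  have same: "eventually (\<lambda>r. 1 / \<beta> * sqrt (U' r ^ 2 / U r powr \<gamma>)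
      = 1 / \<beta> * U r powr (1 / \<beta> - 1) * U' r / 1) (at_right R)"
    using eventually_at_right_less[of R]
    by eventually_elim (metis root_profile_deriv_eq mult.assoc div_by_1)
  have "((\<lambda>r. 1 / \<beta> * sqrt (U' r ^ 2 / U r powr \<gamma>)) \<longlongrightarrow> 1 / \<beta> * sqrt 2) (at_right R)"
    by (rule tendsto_mult_left[OF tendsto_real_sqrt[OF U'_sq_over_U_powr_tendsto_2]])
  then show "((\<lambda>r. 1 / \<beta> * U r powr (1 / \<beta> - 1) * U' r / 1) \<longlongrightarrow> sqrt 2 / \<beta>) (at_right R)"
    using Lim_transform_eventually[OF _ same] by simp
qed simp

definition defect :: "real \<Rightarrow> real"
  where "defect r = r * U' r - \<beta> * U r"

lemma n_plus_beta_pos: "real n - 2 + \<beta> > 0"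
  using n_ge_1 beta_gt_1 by simp

lemma defect_deriv:
  assumes "r > R"
  shows "(defect has_real_derivative
      r * \<gamma> * U r powr (\<gamma> - 1) - (real n - 2 + \<beta>) * U' r - r * defect r / 2) (at r)"
proof -
  have "(defect has_real_derivative U' r + r * U'' r - \<beta> * U' r) (at r)"
    unfolding defect_def by (auto intro!: derivative_eq_intros U_deriv U'_deriv assms)
  moreover have "U' r + r * U'' r - \<beta> * U' r
      = r * \<gamma> * U r powr (\<gamma> - 1) - (real n - 2 + \<beta>) * U' r - r * defect r / 2"
    using assms R_pos by (simp add: U''_eq defect_def drift_def field_simps)
  ultimately show ?thesis by simp
qed

lemma shifted_ratio_deriv:
  assumes "r > R"
  shows "((\<lambda>r. (U r + m) / r powr \<beta>) has_real_derivative
      (defect r - \<beta> * m) / r powr (\<beta> + 1)) (at r)"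
proof -
  have r: "r > 0" using assms R_pos by simp
  have "((\<lambda>r. (U r + m) / r powr \<beta>) has_real_derivative
      ((U' r + 0) * r powr \<beta> - (U r + m) * (\<beta> * r powr (\<beta> - 1))) / (r powr \<beta> * r powr \<beta>)) (at r)"
    by (rule DERIV_divide DERIV_add U_deriv[OF assms] DERIV_const has_real_derivative_powr r
        | use r in simp)+
  moreover have "((U' r + 0) * r powr \<beta> - (U r + m) * (\<beta> * r powr (\<beta> - 1))) / (r powr \<beta> * r powr \<beta>)
      = (defect r - \<beta> * m) / r powr (\<beta> + 1)"
    using r by (simp add: powr_diff powr_add defect_def field_simps)
  ultimately show ?thesis by simp
qed

lemma defect_bounded_above:
  obtains M where "M > 0" "\<And>r. r \<ge> R + 1 \<Longrightarrow> defect r \<le> M"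
proof -
  define r0 where "r0 = R + 1"
  have r0: "r0 > R" using R_pos by (simp add: r0_def)
  define K where "K = \<gamma> * U r0 powr (\<gamma> - 1)"
  define M where "M = max (defect r0) (2 * K) + 1"
  have "K > 0" using gamma_pos U_pos[OF r0] by (simp add: K_def)
  have "M - defect r > 0" if "r \<ge> r0" for r
  proof (rule pos_if_DERIV_pos_at_zeros[OF _ _ _ that])
    fix x assume "x \<ge> r0"
    then show "((\<lambda>r. M - defect r) has_real_derivative
        - (x * \<gamma> * U x powr (\<gamma> - 1) - (real n - 2 + \<beta>) * U' x - x * defect x / 2)) (at x)"
      using r0 by (auto intro!: derivative_eq_intros defect_deriv)
  next
    fix x assume x: "x > r0" "M - defect x = 0"
    then have "x > R" "x > 0" using r0 R_pos by auto
    have "U x powr (\<gamma> - 1) \<le> U r0 powr (\<gamma> - 1)"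
      by (rule powr_mono2') (use gamma_less_1 U_pos[OF r0] U_mono[OF r0] x in auto)
    then have "x * \<gamma> * U x powr (\<gamma> - 1) \<le> x * K"
      unfolding K_def using gamma_pos \<open>x > 0\<close> by (simp add: mult_left_mono)
    moreover have "(real n - 2 + \<beta>) * U' x > 0"
      using n_plus_beta_pos U'_pos[OF \<open>x > R\<close>] by simp
    moreover have "x * K < x * defect x / 2"
      using x \<open>x > 0\<close> by (simp add: M_def)
    ultimately show "- (x * \<gamma> * U x powr (\<gamma> - 1) - (real n - 2 + \<beta>) * U' x - x * defect x / 2) > 0"
      by linarith
  qed (simp add: M_def)
  moreover have "M > 0" using \<open>K > 0\<close> by (simp add: M_def)
  ultimately show ?thesis using that r0_def by fastforce
qed

lemma U_growth_bound:
  obtains C where "C > 0" "\<And>r. r \<ge> R + 1 \<Longrightarrow> U r \<le> C * r powr \<beta>"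
proof -
  obtain M where M: "M > 0" "\<And>r. r \<ge> R + 1 \<Longrightarrow> defect r \<le> M"
    using defect_bounded_above by blast
  define C where "C = (U (R + 1) + M / \<beta>) / (R + 1) powr \<beta>"
  have ratio_le: "(U r + M / \<beta>) / r powr \<beta> \<le> C" if r: "r \<ge> R + 1" for r
    unfolding C_def
  proof (rule DERIV_nonpos_imp_nonincreasing[OF r])
    fix x assume "R + 1 \<le> x"
    then have "x > R" using R_pos by simp
    have "(defect x - \<beta> * (M / \<beta>)) / x powr (\<beta> + 1) \<le> 0"
      using M(2)[OF \<open>R + 1 \<le> x\<close>] beta_gt_1 by (simp add: divide_nonpos_nonneg)
    with shifted_ratio_deriv[OF \<open>x > R\<close>]
    show "\<exists>y. DERIV (\<lambda>r. (U r + M / \<beta>) / r powr \<beta>) x :> y \<and> y \<le> 0" by blast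
  qed
  have "U r \<le> C * r powr \<beta>" if r: "r \<ge> R + 1" for r
  proof -
    have "U r + M / \<beta> \<le> C * r powr \<beta>"
      using ratio_le[OF r] r R_pos by (simp add: divide_le_eq)
    moreover have "M / \<beta> > 0" using M(1) beta_gt_1 by simp
    ultimately show ?thesis by linarith
  qed
  moreover have "C > 0"
    unfolding C_def using U_pos[of "R + 1"] M(1) beta_gt_1 R_pos
    by (intro divide_pos_pos add_pos_pos) auto
  ultimately show ?thesis using that by blast
qed

lemma U'_growth_bound:
  obtains B where "B > 0" "\<And>r. r \<ge> R + 1 \<Longrightarrow> U' r \<le> B * r powr (\<beta> - 1)"
proof -
  obtain M where M: "M > 0" "\<And>r. r \<ge> R + 1 \<Longrightarrow> defect r \<le> M"
    using defect_bounded_above by blast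
  obtain C where C: "C > 0" "\<And>r. r \<ge> R + 1 \<Longrightarrow> U r \<le> C * r powr \<beta>"
    using U_growth_bound by blast
  have "U' r \<le> (M + \<beta> * C) * r powr (\<beta> - 1)" if r: "r \<ge> R + 1" for r
  proof -
    have "r > 0" using r R_pos by simp
    have "r powr \<beta> \<ge> 1" using r R_pos beta_gt_1 by (intro ge_one_powr_ge_zero) auto
    have "U' r = (defect r + \<beta> * U r) / r" using \<open>r > 0\<close> by (simp add: defect_def)
    also have "\<dots> \<le> (M * r powr \<beta> + \<beta> * (C * r powr \<beta>)) / r"
    proof (intro divide_right_mono add_mono)
      show "defect r \<le> M * r powr \<beta>"
        using M r \<open>r powr \<beta> \<ge> 1\<close> by (smt (verit) mult_le_cancel_left1)
      show "\<beta> * U r \<le> \<beta> * (C * r powr \<beta>)" using C(2)[OF r] beta_gt_1 by simp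
    qed (use \<open>r > 0\<close> in simp)
    also have "\<dots> = (M + \<beta> * C) * r powr (\<beta> - 1)"
      using \<open>r > 0\<close> by (simp add: powr_diff algebra_simps)
    finally show ?thesis .
  qed
  moreover have "M + \<beta> * C > 0" using M(1) C(1) beta_gt_1 by (intro add_pos_pos mult_pos_pos) auto
  ultimately show ?thesis using that by blast
qed

lemma defect_barrier_deriv_pos:
  assumes x: "x \<ge> R + 1" "x \<ge> 2" and "L > 0"
    and U'_le: "U' x \<le> B * x powr (\<beta> - 1)"
    and L_ge: "(real n - 2 + \<beta>) * B \<le> L / 4"
    and touch: "defect x + L * x powr (\<beta> - 2) = 0"
  shows "(x * \<gamma> * U x powr (\<gamma> - 1) - (real n - 2 + \<beta>) * U' x - x * defect x / 2)
      + L * ((\<beta> - 2) * x powr (\<beta> - 2 - 1)) > 0"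
proof -
  from x R_pos have "x > R" "x > 0" by auto
  define p where "p = x powr (\<beta> - 1)"
  have "p > 0" using \<open>x \<ge> 2\<close> by (simp add: p_def)
  have powers: "x powr (\<beta> - 2) = p / x" "x powr (\<beta> - 2 - 1) = p / x ^ 2"
    using \<open>x \<ge> 2\<close> by (simp_all add: p_def powr_diff powr_realpow power2_eq_square power3_eq_cube)
  have "x * \<gamma> * U x powr (\<gamma> - 1) > 0"
    using \<open>x \<ge> 2\<close> gamma_pos U_pos[OF \<open>x > R\<close>] by simp
  moreover have "(real n - 2 + \<beta>) * U' x \<le> L / 4 * p"
  proof -
    have "(real n - 2 + \<beta>) * U' x \<le> (real n - 2 + \<beta>) * (B * p)"
      using U'_le n_plus_beta_pos by (simp add: p_def)
    also have "\<dots> = (real n - 2 + \<beta>) * B * p" by (simp only: mult.assoc)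
    also have "\<dots> \<le> L / 4 * p"
      using L_ge \<open>p > 0\<close> by (intro mult_right_mono) auto
    finally show ?thesis .
  qed
  moreover have "x * defect x / 2 = - L / 2 * p"
  proof -
    have "defect x = - (L * p / x)" using touch by (simp add: powers add_eq_0_iff)
    then show ?thesis using \<open>x \<ge> 2\<close> by simp
  qed
  moreover have "L * (2 - \<beta>) * (p / x ^ 2) < L / 4 * p"
  proof -
    have "(2 - \<beta>) / x ^ 2 < 1 / 4"
      using beta_gt_1 \<open>x \<ge> 2\<close> power_mono[of 2 x 2] by (simp add: field_simps)
    then have "(L * p) * ((2 - \<beta>) / x ^ 2) < (L * p) * (1 / 4)"
      using \<open>L > 0\<close> \<open>p > 0\<close> by (intro mult_strict_left_mono) auto
    then show ?thesis by (simp add: mult_ac)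
  qed
  moreover have "L * ((\<beta> - 2) * x powr (\<beta> - 2 - 1)) = - (L * (2 - \<beta>) * (p / x ^ 2))"
    unfolding powers(2) using \<open>x > 0\<close> by (simp add: field_simps)
  ultimately show ?thesis by linarith
qed

lemma defect_lower_bound:
  assumes r1: "r1 \<ge> R + 1" "r1 \<ge> 2" and "L > 0"
    and U'_le: "\<And>r. r \<ge> R + 1 \<Longrightarrow> U' r \<le> B * r powr (\<beta> - 1)"
    and L_ge: "(real n - 2 + \<beta>) * B \<le> L / 4"
    and start: "defect r1 + L * r1 powr (\<beta> - 2) > 0"
    and "r \<ge> r1"
  shows "defect r + L * r powr (\<beta> - 2) > 0"
proof (rule pos_if_DERIV_pos_at_zeros[where a = r1 and h = "\<lambda>r. defect r + L * r powr (\<beta> - 2)"])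
  fix x assume "x \<ge> r1"
  with r1 R_pos have "x > R" "x > 0" by auto
  then show "((\<lambda>r. defect r + L * r powr (\<beta> - 2)) has_real_derivative
      (x * \<gamma> * U x powr (\<gamma> - 1) - (real n - 2 + \<beta>) * U' x - x * defect x / 2)
      + L * ((\<beta> - 2) * x powr (\<beta> - 2 - 1))) (at x)"
    by (intro DERIV_add DERIV_cmult defect_deriv has_real_derivative_powr)
next
  fix x assume "x > r1" "defect x + L * x powr (\<beta> - 2) = 0"
  with r1 U'_le[of x] show "(x * \<gamma> * U x powr (\<gamma> - 1) - (real n - 2 + \<beta>) * U' x - x * defect x / 2)
      + L * ((\<beta> - 2) * x powr (\<beta> - 2 - 1)) > 0"
    by (intro defect_barrier_deriv_pos[OF _ _ \<open>L > 0\<close> _ L_ge]) auto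
qed (use start \<open>r \<ge> r1\<close> in auto)

lemma U_over_power_tendsto_if_defect_lower_bound:
  assumes r1: "r1 \<ge> R + 1" and "L \<ge> 0"
    and defect_ge: "\<And>r. r \<ge> r1 \<Longrightarrow> defect r + L * r powr (\<beta> - 2) > 0"
    and L_less: "L < 2 * U r1 * r1 powr (2 - \<beta>)"
  shows "\<exists>c>0. ((\<lambda>r. U r / r powr \<beta>) \<longlongrightarrow> c) at_top"
proof -
  define G where "G r = U r / r powr \<beta> - L / (2 * r ^ 2)" for r
  have "G s \<le> G t" if "r1 \<le> s" "s \<le> t" for s t
  proof (rule DERIV_nonneg_imp_nondecreasing[OF \<open>s \<le> t\<close>])
    fix x assume "s \<le> x"
    with \<open>r1 \<le> s\<close> r1 R_pos have "x > R" "x > 0" "x \<ge> r1" by auto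
    have "((\<lambda>r. U r / r powr \<beta>) has_real_derivative defect x / x powr (\<beta> + 1)) (at x)"
      using shifted_ratio_deriv[OF \<open>x > R\<close>, of 0] by simp
    moreover have "((\<lambda>r. L / (2 * r ^ 2)) has_real_derivative - L / x ^ 3) (at x)"
      using \<open>x > 0\<close>
      by (auto intro!: derivative_eq_intros simp: field_simps power2_eq_square power3_eq_cube)
    ultimately have "(G has_real_derivative defect x / x powr (\<beta> + 1) - - L / x ^ 3) (at x)"
      unfolding G_def by (rule DERIV_diff)
    moreover have "defect x / x powr (\<beta> + 1) - - L / x ^ 3
        = (defect x + L * x powr (\<beta> - 2)) / x powr (\<beta> + 1)"
      using \<open>x > 0\<close> by (simp add: powr_add powr_diff field_simps power3_eq_cube power2_eq_square)
    moreover have "(defect x + L * x powr (\<beta> - 2)) / x powr (\<beta> + 1) \<ge> 0"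
      using defect_ge[OF \<open>x \<ge> r1\<close>] by simp
    ultimately show "\<exists>y. DERIV G x :> y \<and> y \<ge> 0" by auto
  qed
  then have "mono_on {r1..} G" by (auto intro: mono_onI)
  obtain C where C: "\<And>r. r \<ge> R + 1 \<Longrightarrow> U r \<le> C * r powr \<beta>"
    using U_growth_bound by blast
  have G_le: "G r \<le> C" if "r \<ge> r1" for r
  proof -
    have "U r / r powr \<beta> \<le> C" using C[of r] that r1 R_pos by (simp add: divide_le_eq)
    moreover have "L / (2 * r ^ 2) \<ge> 0" using \<open>L \<ge> 0\<close> by simp
    ultimately show ?thesis by (simp add: G_def)
  qed
  then have G_lim: "(G \<longlongrightarrow> (SUP r\<in>{r1..}. G r)) at_top"
    by (intro mono_on_bounded_tendsto_SUP_at_top[OF \<open>mono_on {r1..} G\<close>])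
  have "G r1 > 0"
    using L_less r1 R_pos by (simp add: G_def powr_diff field_simps power2_eq_square)
  also have "G r1 \<le> (SUP r\<in>{r1..}. G r)"
    using G_le by (intro cSUP_upper) (auto simp: bdd_above_def)
  finally have "(SUP r\<in>{r1..}. G r) > 0" .
  moreover have "((\<lambda>r. G r + L / (2 * r ^ 2)) \<longlongrightarrow> (SUP r\<in>{r1..}. G r) + 0) at_top"
    by (intro tendsto_add G_lim) real_asymp
  ultimately show ?thesis by (auto simp: G_def)
qed

lemma exists_large_start:
  fixes k :: real
  obtains r1 where "r1 \<ge> R + 1" "r1 \<ge> 2" "k \<le> (\<beta> + 2) / 8 * U r1 * r1 powr (2 - \<beta>)"
proof -
  have D: "(\<beta> + 2) * U (R + 1) > 0" using U_pos[of "R + 1"] R_pos beta_gt_1 by simp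
  have "eventually (\<lambda>r. 8 * k / ((\<beta> + 2) * U (R + 1)) \<le> r powr (2 - \<beta>)) at_top"
    using real_powr_at_top[of "2 - \<beta>"] beta_less_2 by (simp add: filterlim_at_top)
  with eventually_ge_at_top[of "max (R + 1) 2"]
  have "eventually (\<lambda>r. max (R + 1) 2 \<le> r \<and> 8 * k / ((\<beta> + 2) * U (R + 1)) \<le> r powr (2 - \<beta>)) at_top"
    by (rule eventually_conj)
  then obtain r1 where r1: "r1 \<ge> R + 1" "r1 \<ge> 2" and
    large: "8 * k / ((\<beta> + 2) * U (R + 1)) \<le> r1 powr (2 - \<beta>)"
    by (auto simp: eventually_at_top_linorder)
  from large D have "8 * k \<le> r1 powr (2 - \<beta>) * ((\<beta> + 2) * U (R + 1))"
    by (simp add: divide_le_eq)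
  then have "k \<le> (\<beta> + 2) / 8 * U (R + 1) * r1 powr (2 - \<beta>)"
    by (simp add: field_simps)
  also have "\<dots> \<le> (\<beta> + 2) / 8 * U r1 * r1 powr (2 - \<beta>)"
    using U_mono[of "R + 1" r1] r1 R_pos beta_gt_1 by simp
  finally show ?thesis using that r1 by blast
qed

lemma U_over_power_tendsto: "\<exists>c>0. ((\<lambda>r. U r / r powr \<beta>) \<longlongrightarrow> c) at_top"
proof -
  obtain B where B: "\<And>r. r \<ge> R + 1 \<Longrightarrow> U' r \<le> B * r powr (\<beta> - 1)"
    using U'_growth_bound by blast
  obtain r1 where r1: "r1 \<ge> R + 1" "r1 \<ge> 2"
    and large: "(real n - 2 + \<beta>) * B \<le> (\<beta> + 2) / 8 * U r1 * r1 powr (2 - \<beta>)"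
    using exists_large_start by blast
  have "U r1 > 0" using U_pos r1 R_pos by auto
  \<comment> \<open>Then L r1^(\<beta>-2) = (\<beta>+2)/2 U r1 lies strictly between \<beta> U r1, so that the barrier
    -L r^(\<beta>-2) starts below the defect, and 2 U r1, so that the limit comes out positive.\<close>
  define L where "L = (\<beta> + 2) / 2 * U r1 * r1 powr (2 - \<beta>)"
  have "L > 0"
    unfolding L_def using \<open>U r1 > 0\<close> beta_gt_1 r1 R_pos by (intro mult_pos_pos) auto
  have L_ge: "(real n - 2 + \<beta>) * B \<le> L / 4" using large by (simp add: L_def)
  have "r1 powr (2 - \<beta>) * r1 powr (\<beta> - 2) = 1"
    using r1 by (simp flip: powr_add)
  then have "L * r1 powr (\<beta> - 2) = (\<beta> + 2) / 2 * U r1" by (simp add: L_def)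
  moreover have "defect r1 > - \<beta> * U r1"
    using U'_pos[of r1] r1 R_pos by (simp add: defect_def)
  moreover have "(\<beta> + 2) / 2 * U r1 > \<beta> * U r1"
    using \<open>U r1 > 0\<close> beta_less_2 by simp
  ultimately have start: "defect r1 + L * r1 powr (\<beta> - 2) > 0" by linarith
  have "L < 2 * U r1 * r1 powr (2 - \<beta>)"
    using \<open>U r1 > 0\<close> beta_less_2 r1 R_pos by (simp add: L_def)
  with defect_lower_bound[OF r1 \<open>L > 0\<close> B L_ge start] r1 \<open>L > 0\<close>
  show ?thesis
    by (intro U_over_power_tendsto_if_defect_lower_bound) auto
qed

end

theorem lemma6p7:
  fixes n :: nat and R \<gamma> \<beta> :: real and U U' U'' :: "real \<Rightarrow> real"
  assumes n: "n \<ge> 1"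
    and R: "R > 0"
    and \<gamma>: "0 < \<gamma>" "\<gamma> < 1"
    and \<beta>: "\<beta> = 2 / (2 - \<gamma>)"
    and dU: "\<And>r. r > R \<Longrightarrow> (U has_real_derivative U' r) (at r)"
    and dU': "\<And>r. r > R \<Longrightarrow> (U' has_real_derivative U'' r) (at r)"
    and cU'': "continuous_on {R<..} U''"
    and pos: "\<And>r. r > R \<Longrightarrow> U r > 0"
    and ode: "\<And>r. r > R \<Longrightarrow>
      U'' r + ((real n - 1) / r + r / 2) * U' r - \<beta> / 2 * U r = \<gamma> * U r powr (\<gamma> - 1)"
    and bc0: "(U \<longlongrightarrow> 0) (at_right R)"
    and bc1: "(U' \<longlongrightarrow> 0) (at_right R)"
  shows "(\<forall>r>R. U r > 0 \<and> U' r > 0)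
    \<and> ((\<lambda>r. U r powr (1 / \<beta>) / (r - R)) \<longlongrightarrow> sqrt 2 / \<beta>) (at_right R)
    \<and> (\<exists>c>0. ((\<lambda>r. U r / r powr \<beta>) \<longlongrightarrow> c) at_top)"
proof -
  interpret self_similar_profile n R \<gamma> \<beta> U U' U''
    using n R \<gamma> \<beta> dU dU' pos ode bc0 bc1 by unfold_locales auto
  show ?thesis
    using U_pos U'_pos root_profile_slope_at_R U_over_power_tendsto by blast
qed

end
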